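(* Let $\Gamma$ be a Deza graph with parameters $(n,k,k-1,a)$, $k>1$, $\beta=1$. For any $NA$-vertex $x$ and any vertex $y\in N(x,x')$, the vertex $y_b$ also belongs to $N(x,x')$.
   Context: A Deza graph with parameters $(n,k,b,a)$, $a\le b$, is a $k$-regular graph on $n$ vertices in which any two distinct vertices have $a$ or $b$ common neighbours; $\beta$ is the number of vertices $u\ne v$ with exactly $b$ common neighbours with a given vertex $v$. Since $\beta=1$, for each vertex $x$ let $x_b$ denote the unique vertex having $b=k-1$ common neighbours with $x$. A vertex $x$ is an $A$-vertex if $x$ is adjacent to $x_b$, and an $NA$-vertex otherwise. $N(x,y)$ is the set of common neighbours of $x$ and $y$. For an $NA$-vertex $x$, $x'$ denotes the unique neighbour of $x$ not adjacent to $x_b$. *)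

theory Defs
  imports Main
begin

definition simple_graph :: "'a set \<Rightarrow> ('a \<Rightarrow> 'a \<Rightarrow> bool) \<Rightarrow> bool" where
  "simple_graph V E \<longleftrightarrow> finite V \<and> (\<forall>x y. E x y \<longrightarrow> x \<in> V \<and> y \<in> V)
     \<and> (\<forall>x y. E x y \<longrightarrow> E y x) \<and> (\<forall>x. \<not> E x x)"

definition nbrs :: "'a set \<Rightarrow> ('a \<Rightarrow> 'a \<Rightarrow> bool) \<Rightarrow> 'a \<Rightarrow> 'a set" where
  "nbrs V E x = {y \<in> V. E x y}"

definition common_nbrs :: "'a set \<Rightarrow> ('a \<Rightarrow> 'a \<Rightarrow> bool) \<Rightarrow> 'a \<Rightarrow> 'a \<Rightarrow> 'a set" where
  "common_nbrs V E x y = nbrs V E x \<inter> nbrs V E y"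

definition deza_graph :: "'a set \<Rightarrow> ('a \<Rightarrow> 'a \<Rightarrow> bool) \<Rightarrow> nat \<Rightarrow> nat \<Rightarrow> nat \<Rightarrow> nat \<Rightarrow> bool" where
  "deza_graph V E n k b a \<longleftrightarrow> simple_graph V E \<and> card V = n \<and> a \<le> b
     \<and> (\<forall>x\<in>V. card (nbrs V E x) = k)
     \<and> (\<forall>x\<in>V. \<forall>y\<in>V. x \<noteq> y \<longrightarrow> card (common_nbrs V E x y) = a \<or> card (common_nbrs V E x y) = b)"

definition beta_count :: "'a set \<Rightarrow> ('a \<Rightarrow> 'a \<Rightarrow> bool) \<Rightarrow> nat \<Rightarrow> 'a \<Rightarrow> nat" where
  "beta_count V E b v = card {u \<in> V. u \<noteq> v \<and> card (common_nbrs V E v u) = b}"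

text \<open>x_b: the unique vertex having b common neighbours with x (meaningful when beta = 1).\<close>
definition bvert :: "'a set \<Rightarrow> ('a \<Rightarrow> 'a \<Rightarrow> bool) \<Rightarrow> nat \<Rightarrow> 'a \<Rightarrow> 'a" where
  "bvert V E b x = (THE u. u \<in> V \<and> u \<noteq> x \<and> card (common_nbrs V E x u) = b)"

definition NA_vertex :: "'a set \<Rightarrow> ('a \<Rightarrow> 'a \<Rightarrow> bool) \<Rightarrow> nat \<Rightarrow> 'a \<Rightarrow> bool" where
  "NA_vertex V E b x \<longleftrightarrow> x \<in> V \<and> \<not> E x (bvert V E b x)"

definition prime_vert :: "'a set \<Rightarrow> ('a \<Rightarrow> 'a \<Rightarrow> bool) \<Rightarrow> nat \<Rightarrow> 'a \<Rightarrow> 'a" where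
  "prime_vert V E b x = (THE z. z \<in> nbrs V E x \<and> \<not> E z (bvert V E b x))"

end

theory Submission
  imports Defs
begin

(* For every vertex v, the k - 1 common neighbours of v and v_b together with v' make up N(v),
   and likewise with v_b' for N(v_b).  Every other vertex w has a common neighbours with both v
   and v_b, so w is adjacent to v' iff it is adjacent to v_b'.  Hence N(v') - {v} lies in
   N(v_b'), which forces (v')_b = (v_b)' and v'' = v.  Now if y is adjacent to x and x' but
   not to y_b, then x is the neighbour y' of y, so x' = y'' = y, which is absurd; applying this
   to x and to x' (using x'' = x) gives the claim.  The argument never uses that x is an
   NA-vertex: for an A-vertex x the vertex x' defined by prime_vert is x_b itself. *)

lemma card_insert_Int_eq_imp_mem_iff:
  assumes "finite C" "p \<notin> C" "u \<notin> C" "card (insert p C \<inter> X) = card (insert u C \<inter> X)"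
  shows "p \<in> X \<longleftrightarrow> u \<in> X"
  using assms by (auto simp: Int_insert_left split: if_splits)

lemma common_nbrs_commute: "common_nbrs V E x y = common_nbrs V E y x"
  unfolding common_nbrs_def by blast

locale unique_bvert =
  fixes V :: "'a set" and E :: "'a \<Rightarrow> 'a \<Rightarrow> bool" and b :: nat
  assumes beta_count_one: "\<And>v. v \<in> V \<Longrightarrow> beta_count V E b v = 1"
begin

abbreviation bv :: "'a \<Rightarrow> 'a" where "bv \<equiv> bvert V E b"

lemma bvert_set_eq:
  assumes "v \<in> V"
  shows "{u \<in> V. u \<noteq> v \<and> card (common_nbrs V E v u) = b} = {bv v}"
proof -
  obtain u0 where u0: "{u \<in> V. u \<noteq> v \<and> card (common_nbrs V E v u) = b} = {u0}"
    using beta_count_one[OF assms] unfolding beta_count_def by (meson card_1_singletonE)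
  then have "bv v = u0"
    unfolding bvert_def by (intro the_equality) blast+
  with u0 show ?thesis by simp
qed

lemma bvert:
  assumes "v \<in> V"
  shows "bv v \<in> V" "bv v \<noteq> v" "card (common_nbrs V E v (bv v)) = b"
  using bvert_set_eq[OF assms] by blast+

lemma bvert_unique:
  "v \<in> V \<Longrightarrow> u \<in> V \<Longrightarrow> u \<noteq> v \<Longrightarrow> card (common_nbrs V E v u) = b \<Longrightarrow> u = bv v"
  using bvert_set_eq by blast

lemma bvert_bvert:
  assumes "v \<in> V"
  shows "bv (bv v) = v"
proof -
  have "card (common_nbrs V E (bv v) v) = b"
    using bvert(3)[OF assms] by (simp add: common_nbrs_commute)
  then show ?thesis
    using bvert_unique[OF bvert(1)[OF assms] assms] bvert(2)[OF assms] by auto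
qed

end

locale deza_unique_bvert = unique_bvert V E "k - 1" for V :: "'a set" and E and k :: nat +
  fixes n a :: nat
  assumes deza: "deza_graph V E n k (k - 1) a"
    and k_pos: "0 < k"
begin

abbreviation pv :: "'a \<Rightarrow> 'a" where "pv \<equiv> prime_vert V E (k - 1)"

lemma finite_V: "finite V"
  using deza unfolding deza_graph_def simple_graph_def by blast

lemma adj_in_V: "E x y \<Longrightarrow> x \<in> V \<and> y \<in> V"
  using deza unfolding deza_graph_def simple_graph_def by blast

lemma adj_sym: "E x y \<Longrightarrow> E y x"
  using deza unfolding deza_graph_def simple_graph_def by blast

lemma not_adj_self: "\<not> E x x"
  using deza unfolding deza_graph_def simple_graph_def by blast

lemma card_nbrs: "x \<in> V \<Longrightarrow> card (nbrs V E x) = k"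
  using deza unfolding deza_graph_def by blast

lemma mem_nbrs_iff: "w \<in> nbrs V E x \<longleftrightarrow> E x w"
  unfolding nbrs_def using adj_in_V by blast

lemma finite_nbrs: "finite (nbrs V E x)"
  using finite_V unfolding nbrs_def by simp

lemma card_common_nbrs_eq_a:
  assumes "v \<in> V" "w \<in> V" "w \<noteq> v" "w \<noteq> bv v"
  shows "card (common_nbrs V E v w) = a"
proof -
  have "card (common_nbrs V E v w) = a \<or> card (common_nbrs V E v w) = k - 1"
    using deza assms(1-3) unfolding deza_graph_def by auto
  then show ?thesis
    using bvert_unique[OF assms(1-3)] assms(4) by blast
qed

lemma ex1_nbr_not_adj_bvert:
  assumes "v \<in> V"
  shows "\<exists>!z. z \<in> nbrs V E v \<and> \<not> E z (bv v)"
proof -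
  let ?C = "common_nbrs V E v (bv v)"
  have sub: "?C \<subseteq> nbrs V E v"
    unfolding common_nbrs_def by blast
  have "card (nbrs V E v - ?C) = 1"
    using card_Diff_subset[OF finite_subset[OF sub finite_nbrs] sub]
      bvert(3)[OF assms] card_nbrs[OF assms] k_pos by simp
  then obtain z where z: "nbrs V E v - ?C = {z}"
    by (meson card_1_singletonE)
  have "w \<in> nbrs V E v \<and> \<not> E w (bv v) \<longleftrightarrow> w = z" for w
    using z unfolding common_nbrs_def using mem_nbrs_iff adj_sym by blast
  then show ?thesis by auto
qed

lemma prime_vert:
  assumes "v \<in> V"
  shows "E v (pv v)" "\<not> E (pv v) (bv v)"
proof -
  have "pv v \<in> nbrs V E v \<and> \<not> E (pv v) (bv v)"
    unfolding prime_vert_def by (rule theI'[OF ex1_nbr_not_adj_bvert[OF assms]])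
  then show "E v (pv v)" "\<not> E (pv v) (bv v)"
    using mem_nbrs_iff by blast+
qed

lemma prime_vert_unique:
  assumes "v \<in> V" "E v z" "\<not> E z (bv v)"
  shows "z = pv v"
proof -
  have "pv v = z"
    unfolding prime_vert_def
    by (rule the1_equality[OF ex1_nbr_not_adj_bvert[OF assms(1)]])
      (use assms(2,3) mem_nbrs_iff in blast)
  then show ?thesis ..
qed

lemma nbrs_eq_insert_prime_vert:
  assumes v: "v \<in> V"
  shows "nbrs V E v = insert (pv v) (common_nbrs V E v (bv v))"
    and "pv v \<notin> common_nbrs V E v (bv v)"
proof -
  show "nbrs V E v = insert (pv v) (common_nbrs V E v (bv v))"
  proof (intro equalityI subsetI)
    fix w
    assume "w \<in> nbrs V E v"
    then have "E v w"
      by (simp add: mem_nbrs_iff)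
    show "w \<in> insert (pv v) (common_nbrs V E v (bv v))"
    proof (cases "E w (bv v)")
      case True
      then show ?thesis
        using \<open>E v w\<close> adj_sym[OF True] by (simp add: common_nbrs_def mem_nbrs_iff)
    next
      case False
      then show ?thesis
        using prime_vert_unique[OF v \<open>E v w\<close> False] by simp
    qed
  next
    fix w
    assume "w \<in> insert (pv v) (common_nbrs V E v (bv v))"
    then show "w \<in> nbrs V E v"
      using prime_vert(1)[OF v] by (auto simp: common_nbrs_def mem_nbrs_iff)
  qed
  show "pv v \<notin> common_nbrs V E v (bv v)"
    using prime_vert(2)[OF v] adj_sym[of "bv v" "pv v"] mem_nbrs_iff
    unfolding common_nbrs_def by blast
qed

lemma adj_prime_vert_iff_adj_prime_vert_bvert:
  assumes v: "v \<in> V" and w: "w \<in> V" "w \<noteq> v" "w \<noteq> bv v"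
  shows "E w (pv v) \<longleftrightarrow> E w (pv (bv v))"
proof -
  define C where "C = common_nbrs V E v (bv v)"
  have bv_V: "bv v \<in> V" and bv_bv: "bv (bv v) = v"
    using bvert[OF v] bvert_bvert[OF v] by auto
  have Nv: "nbrs V E v = insert (pv v) C" "pv v \<notin> C"
    using nbrs_eq_insert_prime_vert[OF v] unfolding C_def by auto
  have Nq: "nbrs V E (bv v) = insert (pv (bv v)) C" "pv (bv v) \<notin> C"
    using nbrs_eq_insert_prime_vert[OF bv_V]
    unfolding C_def bv_bv common_nbrs_commute[of V E "bv v" v] by auto
  have "finite C"
    unfolding C_def common_nbrs_def using finite_nbrs by blast
  have "w \<noteq> bv (bv v)"
    using w(2) bv_bv by simp
  then have "card (common_nbrs V E v w) = card (common_nbrs V E (bv v) w)"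
    using card_common_nbrs_eq_a[OF v w] card_common_nbrs_eq_a[OF bv_V w(1,3)] by simp
  then have "card (insert (pv v) C \<inter> nbrs V E w) = card (insert (pv (bv v)) C \<inter> nbrs V E w)"
    unfolding common_nbrs_def Nv(1) Nq(1) .
  then have "pv v \<in> nbrs V E w \<longleftrightarrow> pv (bv v) \<in> nbrs V E w"
    by (rule card_insert_Int_eq_imp_mem_iff[OF \<open>finite C\<close> Nv(2) Nq(2)])
  then show ?thesis
    using mem_nbrs_iff adj_sym by blast
qed

lemma common_nbrs_prime_vert_prime_vert_bvert:
  assumes v: "v \<in> V"
  shows "common_nbrs V E (pv v) (pv (bv v)) = nbrs V E (pv v) - {v}"
proof -
  have bv_V: "bv v \<in> V" and bv_bv: "bv (bv v) = v"
    using bvert[OF v] bvert_bvert[OF v] by auto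
  have "\<not> E (pv (bv v)) v"
    using prime_vert(2)[OF bv_V] bv_bv by simp
  moreover have "E w (pv (bv v))" if "E (pv v) w" "w \<noteq> v" for w
    using adj_prime_vert_iff_adj_prime_vert_bvert[OF v, of w] that prime_vert(2)[OF v]
      adj_in_V adj_sym by blast
  ultimately show ?thesis
    unfolding common_nbrs_def using mem_nbrs_iff adj_sym by blast
qed

lemma bvert_prime_vert:
  assumes v: "v \<in> V"
  shows "bv (pv v) = pv (bv v)"
proof -
  have bv_V: "bv v \<in> V" and bv_bv: "bv (bv v) = v"
    using bvert[OF v] bvert_bvert[OF v] by auto
  have p_V: "pv v \<in> V" and p_adj: "E (pv v) v"
    using prime_vert(1)[OF v] adj_in_V adj_sym by blast+
  have u_V: "pv (bv v) \<in> V"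
    using prime_vert(1)[OF bv_V] adj_in_V by blast
  have u_not_adj: "\<not> E (pv (bv v)) v"
    using prime_vert(2)[OF bv_V] unfolding bv_bv .
  have "pv (bv v) \<noteq> pv v"
    using p_adj u_not_adj by metis
  moreover have "card (nbrs V E (pv v) - {v}) = k - 1"
    using card_nbrs[OF p_V] p_adj by (simp add: finite_nbrs mem_nbrs_iff)
  then have "card (common_nbrs V E (pv v) (pv (bv v))) = k - 1"
    unfolding common_nbrs_prime_vert_prime_vert_bvert[OF v] .
  ultimately have "pv (bv v) = bv (pv v)"
    by (rule bvert_unique[OF p_V u_V])
  then show ?thesis ..
qed

lemma prime_vert_prime_vert:
  assumes v: "v \<in> V"
  shows "pv (pv v) = v"
proof -
  have p_V: "pv v \<in> V" and p_adj: "E (pv v) v"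
    using prime_vert(1)[OF v] adj_in_V adj_sym by blast+
  have "\<not> E (pv (bv v)) (bv (bv v))"
    using prime_vert(2) bvert(1)[OF v] by blast
  then have "\<not> E v (bv (pv v))"
    using bvert_prime_vert[OF v] bvert_bvert[OF v] adj_sym by metis
  then have "v = pv (pv v)"
    by (rule prime_vert_unique[OF p_V p_adj])
  then show ?thesis ..
qed

lemma adj_bvert_if_adj_prime_vert:
  assumes "E z y" "E (pv z) y"
  shows "E z (bv y)"
proof (rule ccontr)
  assume "\<not> E z (bv y)"
  then have "z = pv y"
    using prime_vert_unique assms(1) adj_in_V adj_sym by blast
  then have "pv z = y"
    using prime_vert_prime_vert assms(1) adj_in_V by blast
  with assms(2) show False
    using not_adj_self by simp
qed

end

theorem lemma7:
  fixes V :: "'a set" and E :: "'a \<Rightarrow> 'a \<Rightarrow> bool" and n k a :: nat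
  assumes "deza_graph V E n k (k - 1) a"
    and "k > 1"
    and "\<forall>v\<in>V. beta_count V E (k - 1) v = 1"
    and "NA_vertex V E (k - 1) x"
    and "y \<in> common_nbrs V E x (prime_vert V E (k - 1) x)"
  shows "bvert V E (k - 1) y \<in> common_nbrs V E x (prime_vert V E (k - 1) x)"
proof -
  interpret deza_unique_bvert V E k n a
    using assms(1-3) by unfold_locales auto
  have x: "x \<in> V"
    using assms(4) unfolding NA_vertex_def by blast
  have y: "E x y" "E (pv x) y"
    using assms(5) by (auto simp: common_nbrs_def mem_nbrs_iff)
  have "E x (bv y)"
    using adj_bvert_if_adj_prime_vert y by blast
  moreover have "E (pv x) (bv y)"
    using adj_bvert_if_adj_prime_vert[of "pv x" y] y prime_vert_prime_vert[OF x] by simp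
  ultimately show ?thesis
    by (auto simp: common_nbrs_def mem_nbrs_iff)
qed

end
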